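(* Let $a_0,a_1,a_2,a_3\in\mathbb{R}$ and for real $\lambda$ let $$\mathbf{M}_\lambda=\begin{bmatrix}1&\frac{a_3}{2}&\frac{a_2-\lambda}{2}\\[2pt] \frac{a_3}{2}&\lambda&\frac{a_1}{2}\\[2pt] \frac{a_2-\lambda}{2}&\frac{a_1}{2}&a_0\end{bmatrix}.$$ If $\lambda_i\in\mathbb{R}$ is such that the conic $\mathbf{M}_{\lambda_i}$ is a degenerate conic consisting of a complex conjugate line-pair, then $\operatorname{rank}\mathbf{M}_{\lambda_i}=2$ and $\lambda_i\ge \frac{a_3^2}{4}$.
   Context: A real symmetric $3\times3$ matrix $\mathbf{M}$ defines the conic $\{[u:v:w]\in\mathbb{P}^2(\mathbb{C}) : (u,v,w)\mathbf{M}(u,v,w)^T=0\}$. The conic "consists of a complex conjugate line-pair" if the quadratic form $(u,v,w)\mathbf{M}(u,v,w)^T$ factors as $\ell\,\bar\ell$ where $\ell$ is a linear form with complex coefficients not proportional to any real linear form and $\bar\ell$ is its complex conjugate. *)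

theory Defs
  imports "HOL-Analysis.Analysis"
begin

definition Mlam :: "real \<Rightarrow> real \<Rightarrow> real \<Rightarrow> real \<Rightarrow> real \<Rightarrow> real^3^3" where
  "Mlam a0 a1 a2 a3 lam =
     vector [vector [1, a3/2, (a2 - lam)/2],
             vector [a3/2, lam, a1/2],
             vector [(a2 - lam)/2, a1/2, a0]]"

definition cquad :: "real^3^3 \<Rightarrow> complex^3 \<Rightarrow> complex" where
  "cquad M x = (\<Sum>i\<in>UNIV. \<Sum>j\<in>UNIV. of_real (M$i$j) * x$i * x$j)"

definition lform :: "complex^3 \<Rightarrow> complex^3 \<Rightarrow> complex" where
  "lform l x = (\<Sum>i\<in>UNIV. l$i * x$i)"

text \<open>The conic consists of a complex conjugate line-pair: the quadratic form factors
  as l * conj(l) with l not proportional to any real linear form.\<close>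
definition cc_line_pair :: "real^3^3 \<Rightarrow> bool" where
  "cc_line_pair M \<longleftrightarrow>
     (\<exists>l::complex^3.
        \<not> (\<exists>(c::complex) (r::real^3). \<forall>i. l$i = c * of_real (r$i)) \<and>
        (\<forall>x. cquad M x = lform l x * lform (\<chi> i. cnj (l$i)) x))"

end

theory Submission
  imports Defs
begin

text \<open>Writing \<open>l = p + i q\<close> with real \<open>p, q\<close>, the factorisation says \<open>M = p p\<^sup>T + q q\<^sup>T\<close>,
  i.e. \<open>M\<^sub>i\<^sub>j = Re (l\<^sub>i cnj l\<^sub>j)\<close>. Hence every principal 2x2 minor \<open>M\<^sub>i\<^sub>i M\<^sub>j\<^sub>j - M\<^sub>i\<^sub>j\<^sup>2\<close>
  equals \<open>Im (l\<^sub>i cnj l\<^sub>j)\<^sup>2 \<ge> 0\<close>; on rows \<open>{1,2}\<close> this minor is \<open>\<lambda> - a\<^sub>3\<^sup>2/4\<close>.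
  Since \<open>M\<^sub>1\<^sub>1 = 1\<close> forces \<open>l\<^sub>1 \<noteq> 0\<close>, and \<open>l\<close> is not a multiple of a real vector, some
  \<open>Im (l\<^sub>1 cnj l\<^sub>j)\<close> is nonzero, so \<open>rank M \<ge> 2\<close>; \<open>det M = 0\<close> gives \<open>rank M \<le> 2\<close>.\<close>

definition conj_pair_factor :: "real^3^3 \<Rightarrow> complex^3 \<Rightarrow> bool" where
  "conj_pair_factor M l \<longleftrightarrow> (\<forall>x. cquad M x = lform l x * lform (\<chi> i. cnj (l$i)) x)"

lemma cquad_axis: "cquad M (axis i 1) = of_real (M$i$i)"
  by (simp add: cquad_def axis_def if_distrib if_distribR sum.If_cases)

lemma cquad_axis_add:
  assumes "i \<noteq> j"
  shows "cquad M (axis i 1 + axis j 1) = of_real (M$i$i + M$j$j + M$i$j + M$j$i)"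
  using assms by (simp add: cquad_def axis_def algebra_simps sum.distrib if_distrib if_distribR sum.If_cases)

lemma lform_axis: "lform l (axis i 1) = l$i"
  by (simp add: lform_def axis_def if_distrib if_distribR sum.If_cases)

lemma lform_add: "lform l (x + y) = lform l x + lform l y"
  by (simp add: lform_def algebra_simps sum.distrib)

lemma conj_pair_factor_diag:
  assumes "conj_pair_factor M l"
  shows "M$i$i = (cmod (l$i))\<^sup>2"
proof -
  have "of_real (M$i$i) = l$i * cnj (l$i)"
    using assms[unfolded conj_pair_factor_def, rule_format, of "axis i 1"]
    by (simp add: cquad_axis lform_axis)
  also have "\<dots> = of_real ((cmod (l$i))\<^sup>2)"
    by (rule complex_norm_square[symmetric])
  finally show ?thesis
    by (simp only: of_real_eq_iff)
qed

lemma Re_sum_mult_cnj: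
  "Re ((a + b) * (cnj a + cnj b)) = (cmod a)\<^sup>2 + (cmod b)\<^sup>2 + 2 * Re (a * cnj b)"
  unfolding cmod_power2 by (simp add: power2_eq_square algebra_simps)

lemma conj_pair_factor_entry:
  assumes "conj_pair_factor M l" and "M$j$i = M$i$j"
  shows "M$i$j = Re (l$i * cnj (l$j))"
proof (cases "i = j")
  case True
  then show ?thesis
    using conj_pair_factor_diag[OF assms(1)] by (simp add: complex_mult_cnj cmod_power2)
next
  case False
  have "of_real (M$i$i + M$j$j + M$i$j + M$j$i) = (l$i + l$j) * (cnj (l$i) + cnj (l$j))"
    using assms(1)[unfolded conj_pair_factor_def, rule_format, of "axis i 1 + axis j 1"] False
    by (simp add: cquad_axis_add lform_add lform_axis)
  from arg_cong[OF this, of Re]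
  have "M$i$i + M$j$j + M$i$j + M$j$i = (cmod (l$i))\<^sup>2 + (cmod (l$j))\<^sup>2 + 2 * Re (l$i * cnj (l$j))"
    by (simp only: Re_complex_of_real Re_sum_mult_cnj)
  then show ?thesis
    using assms(2) conj_pair_factor_diag[OF assms(1), of i] conj_pair_factor_diag[OF assms(1), of j]
    by linarith
qed

lemma conj_pair_factor_minor:
  assumes "conj_pair_factor M l" and "M$j$i = M$i$j"
  shows "M$i$i * M$j$j - M$i$j * M$j$i = (Im (l$i * cnj (l$j)))\<^sup>2"
proof -
  have "M$i$i * M$j$j = (cmod (l$i * cnj (l$j)))\<^sup>2"
    using conj_pair_factor_diag[OF assms(1)] by (simp add: norm_mult power_mult_distrib)
  moreover have "M$i$j * M$j$i = (Re (l$i * cnj (l$j)))\<^sup>2"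
    using conj_pair_factor_entry[OF assms] assms(2) by (simp add: power2_eq_square)
  ultimately show ?thesis
    by (simp add: cmod_power2)
qed

lemma proportional_to_real_if_Im_mult_cnj_eq_0:
  fixes l :: "complex^'n"
  assumes "l$k \<noteq> 0" and "\<forall>j. Im (l$k * cnj (l$j)) = 0"
  shows "\<exists>c r. \<forall>i. l$i = c * of_real (r$i)"
proof (intro exI allI)
  fix i
  have "Im (cnj (l$k) * l$i) = 0"
    using assms(2) by (metis complex_cnj_cnj complex_cnj_mult cnj.sel(2) neg_equal_0_iff_equal)
  then have "of_real (Re (cnj (l$k) * l$i)) = cnj (l$k) * l$i"
    by (simp add: complex_eq_iff)
  then show "l$i = inverse (cnj (l$k)) * of_real ((\<chi> j. Re (cnj (l$k) * l$j))$i)"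
    using assms(1) by simp
qed

lemma two_le_rank_if_minor_nonzero:
  fixes M :: "real^'n^'m"
  assumes minor: "M$i$j * M$k$m - M$i$m * M$k$j \<noteq> 0"
  shows "2 \<le> rank M"
proof -
  have "row i M \<noteq> 0"
  proof
    assume "row i M = 0"
    then have "M$i$j = 0" and "M$i$m = 0"
      by (auto simp: row_def vec_eq_iff)
    then show False
      using minor by simp
  qed
  moreover have not_span: "row k M \<notin> span {row i M}"
  proof
    assume "row k M \<in> span {row i M}"
    then obtain c where "row k M = c *\<^sub>R row i M"
      by (auto simp: span_singleton)
    then have "M$k$j = c * M$i$j" and "M$k$m = c * M$i$m"
      by (auto simp: row_def vec_eq_iff)
    then show False
      using minor by (simp add: algebra_simps)
  qed
  ultimately have "independent {row k M, row i M}"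
    by (intro independent_insertI independent_empty) auto
  moreover have "row k M \<noteq> row i M"
    using not_span span_base by blast
  moreover have "{row k M, row i M} \<subseteq> rows M"
    by (auto simp: rows_def)
  ultimately show ?thesis
    unfolding row_rank_def by (metis card_2_iff independent_card_le_dim)
qed

lemma Mlam_symmetric: "Mlam a0 a1 a2 a3 lam $ j $ i = Mlam a0 a1 a2 a3 lam $ i $ j"
  using exhaust_3[of i] exhaust_3[of j] by (auto simp: Mlam_def vector_def)

theorem lemma2:
  fixes a0 a1 a2 a3 lam :: real
  assumes "det (Mlam a0 a1 a2 a3 lam) = 0"
    and "cc_line_pair (Mlam a0 a1 a2 a3 lam)"
  shows "rank (Mlam a0 a1 a2 a3 lam) = 2 \<and> lam \<ge> a3^2 / 4"
proof -
  let ?M = "Mlam a0 a1 a2 a3 lam"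
  obtain l where not_real: "\<not> (\<exists>c r. \<forall>i. l$i = c * of_real (r$i))"
    and fac: "conj_pair_factor ?M l"
    using assms(2) unfolding cc_line_pair_def conj_pair_factor_def by blast
  have minor: "?M$1$1 * ?M$j$j - ?M$1$j * ?M$j$1 = (Im (l$1 * cnj (l$j)))\<^sup>2" for j
    using conj_pair_factor_minor[OF fac Mlam_symmetric] .
  have "l$1 \<noteq> 0"
    using conj_pair_factor_diag[OF fac, of 1] by (auto simp: Mlam_def vector_def)
  then obtain j where "Im (l$1 * cnj (l$j)) \<noteq> 0"
    using proportional_to_real_if_Im_mult_cnj_eq_0 not_real by blast
  then have "2 \<le> rank ?M"
    by (intro two_le_rank_if_minor_nonzero[of _ 1 1 j j]) (simp add: minor)
  moreover have "rank ?M < 3"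
    using assms(1) det_eq_0_rank[of ?M] by simp
  moreover have "a3^2 / 4 \<le> lam"
  proof -
    have "lam - a3^2 / 4 = (Im (l$1 * cnj (l$2)))\<^sup>2"
      using minor[of 2] by (simp add: Mlam_def vector_def power2_eq_square)
    then show ?thesis
      by (metis diff_ge_0_iff_ge zero_le_power2)
  qed
  ultimately show ?thesis
    by linarith
qed

end
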